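(* For the linear regression for classification (LRC) problem $\min_{D}\|F-D\tilde{A}\|_F^2$, when the ideal graph condition for classification is satisfied, the fitting error achieves the minimum value, $\epsilon=1$, and the spectral risk is \[ \gamma=1+\frac{\bar{\zeta}}{\beta}, \] with \[ 1+\frac{1}{\zeta_\rho |\cos \theta_u|}\leq \gamma \leq 1+\frac{\zeta_\rho}{|\cos \theta_u|}. \]
   Context: Let $A=[A_1,\dots,A_n]\in\mathbb{R}^{p\times n}$ be a mean-removed data matrix ($A\mathbf{1}=\mathbf{0}$) and $F=[F_1,\dots,F_n]\in\mathbb{R}^{K\times n}$ the class indicator matrix ($F_i$ has a one in the entry of the class of sample $i$ and zeros elsewhere). Define $\beta\doteq-\min_{ij}(A^TA)_{ij}$ (which is positive) and the augmented data matrix $\tilde{A}=\begin{bmatrix}\sqrt{\beta}\mathbf{1}^T\\ A\end{bmatrix}$, assumed to have rank $p+1$, so that the LRC solution is $D^*=F\tilde{A}^T(\tilde{A}\tilde{A}^T)^{-1}$. Let $W\doteq\tilde{A}^T\tilde{A}$ (nonnegative by the choice of $\beta$). The ideal graph condition for classification holds if $W_{ij}=0$ whenever $F_i\neq F_j$. The (relative) fitting error is $\epsilon\doteq\|F-D^*\tilde{A}\|_F^2/\|D^*\tilde{A}\|_F^2+1$ and the (relative) spectral risk is $\gamma\doteq\|D^*\|_F^2\|\tilde{A}\|_F^2/\|D^*\tilde{A}\|_F^2$. Let $\bar{\zeta}\doteq\|A\|_F^2/n$ be the mean squared length of the original data, $\zeta_\rho\doteq\max_i\|A_i\|_2^2/\min_i\|A_i\|_2^2$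 the ratio between maximum and minimum squared lengths, and $\theta_u$ the maximum included angle between pairs of original data vectors $A_i,A_j$. *)

theory Defs
  imports "Jordan_Normal_Form.DL_Rank" "Jordan_Normal_Form.Gauss_Jordan_Elimination"
begin

definition frob_sq :: "real mat \<Rightarrow> real" where
  "frob_sq M = (\<Sum>i<dim_row M. \<Sum>j<dim_col M. (M $$ (i,j))^2)"

definition beta_of :: "real mat \<Rightarrow> real" where
  "beta_of A = - Min {(A\<^sup>T * A) $$ (i,j) | i j. i < dim_col A \<and> j < dim_col A}"

definition aug_mat :: "real mat \<Rightarrow> real mat" where
  "aug_mat A = mat (Suc (dim_row A)) (dim_col A)
     (\<lambda>(i,j). if i = 0 then sqrt (beta_of A) else A $$ (i - 1, j))"

definition lrc_sol :: "real mat \<Rightarrow> real mat \<Rightarrow> real mat" where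
  "lrc_sol F At = F * At\<^sup>T * the (mat_inverse (At * At\<^sup>T))"

definition fit_err :: "real mat \<Rightarrow> real mat \<Rightarrow> real" where
  "fit_err F At = frob_sq (F - lrc_sol F At * At) / frob_sq (lrc_sol F At * At) + 1"

definition spec_risk :: "real mat \<Rightarrow> real mat \<Rightarrow> real" where
  "spec_risk F At = frob_sq (lrc_sol F At) * frob_sq At / frob_sq (lrc_sol F At * At)"

definition incl_angle :: "real vec \<Rightarrow> real vec \<Rightarrow> real" where
  "incl_angle x y = arccos ((x \<bullet> y) / (sqrt (x \<bullet> x) * sqrt (y \<bullet> y)))"

definition zeta_bar :: "real mat \<Rightarrow> real" where
  "zeta_bar A = frob_sq A / real (dim_col A)"

definition zeta_rho :: "real mat \<Rightarrow> real" where
  "zeta_rho A = Max {col A i \<bullet> col A i | i. i < dim_col A} / Min {col A i \<bullet> col A i | i. i < dim_col A}"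

definition theta_u :: "real mat \<Rightarrow> real" where
  "theta_u A = Max {incl_angle (col A i) (col A j) | i j. i < dim_col A \<and> j < dim_col A}"

end

theory Submission
  imports Defs "HOL-Analysis.L2_Norm"
begin

text \<open>Write \<open>A'\<close> for the augmented matrix and \<open>W = A'\<^sup>T A'\<close>, so \<open>W\<^sub>i\<^sub>j = \<beta> + \<langle>A\<^sub>i, A\<^sub>j\<rangle>\<close>.
  Since the data are mean-removed every column of \<open>W\<close> sums to \<open>n\<beta>\<close>, and under the ideal graph
  condition column \<open>j\<close> of \<open>W\<close> is supported on the class of sample \<open>j\<close>; hence \<open>F W = n\<beta> F\<close>.
  Then \<open>F A'\<^sup>T (A' A'\<^sup>T) = n\<beta> F A'\<^sup>T\<close>, so \<open>D\<^sup>* = F A'\<^sup>T / (n\<beta>)\<close>, \<open>D\<^sup>* A' = F\<close> and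
  \<open>\<parallel>D\<^sup>*\<parallel>\<^sup>2 = tr (F W F\<^sup>T) / (n\<beta>)\<^sup>2 = 1/\<beta>\<close>; with \<open>\<parallel>A'\<parallel>\<^sup>2 = n\<beta> + \<parallel>A\<parallel>\<^sup>2\<close> this gives
  \<open>\<gamma> = 1 + \<parallel>A\<parallel>\<^sup>2/(n\<beta>)\<close>. That \<open>\<beta> > 0\<close> follows because a vanishing column sum of \<open>A\<^sup>T A\<close>
  with a positive diagonal entry must contain a negative entry.
  For the bounds, \<open>\<beta> = -\<langle>A\<^sub>i, A\<^sub>j\<rangle>\<close> for some pair, which is at most \<open>-cos \<theta>\<^sub>u\<close> times the
  largest squared length, while the pair realising \<open>\<theta>\<^sub>u\<close> gives \<open>\<beta> \<ge> -cos \<theta>\<^sub>u\<close> times the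
  smallest one.\<close>

lemma scalar_prod_self_eq_0_iff:
  assumes "(v :: real vec) \<in> carrier_vec n"
  shows "v \<bullet> v = 0 \<longleftrightarrow> v = 0\<^sub>v n"
  using conjugate_square_eq_0_vec[OF assms] by simp

lemma scalar_prod_self_pos:
  assumes "(v :: real vec) \<in> carrier_vec n" and "v \<noteq> 0\<^sub>v n"
  shows "0 < v \<bullet> v"
  using conjugate_square_greater_0_vec[OF assms(1)] assms(2) by simp

lemma abs_scalar_prod_le:
  fixes x y :: "real vec"
  assumes "dim_vec x = dim_vec y"
  shows "\<bar>x \<bullet> y\<bar> \<le> sqrt (x \<bullet> x) * sqrt (y \<bullet> y)"
proof -
  let ?I = "{0..<dim_vec y}"
  have "\<bar>x \<bullet> y\<bar> \<le> (\<Sum>i\<in>?I. \<bar>x $ i\<bar> * \<bar>y $ i\<bar>)"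
    unfolding scalar_prod_def abs_mult[symmetric] by (rule sum_abs)
  also have "\<dots> \<le> L2_set (\<lambda>i. x $ i) ?I * L2_set (\<lambda>i. y $ i) ?I"
    by (rule L2_set_mult_ineq)
  also have "L2_set (\<lambda>i. x $ i) ?I = sqrt (x \<bullet> x)"
    unfolding L2_set_def scalar_prod_def assms power2_eq_square ..
  also have "L2_set (\<lambda>i. y $ i) ?I = sqrt (y \<bullet> y)"
    unfolding L2_set_def scalar_prod_def power2_eq_square ..
  finally show ?thesis .
qed

lemma cos_incl_angle:
  fixes x y :: "real vec"
  assumes "dim_vec x = dim_vec y" and "0 < x \<bullet> x" and "0 < y \<bullet> y"
  shows "cos (incl_angle x y) = (x \<bullet> y) / (sqrt (x \<bullet> x) * sqrt (y \<bullet> y))"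
    and "0 \<le> incl_angle x y" and "incl_angle x y \<le> pi"
proof -
  let ?s = "sqrt (x \<bullet> x) * sqrt (y \<bullet> y)"
  have "0 < ?s" using assms(2,3) by simp
  then have "\<bar>(x \<bullet> y) / ?s\<bar> \<le> 1"
    using abs_scalar_prod_le[OF assms(1)] by (simp only: abs_div_pos[symmetric] pos_divide_le_eq mult_1)
  then have "-1 \<le> (x \<bullet> y) / ?s" "(x \<bullet> y) / ?s \<le> 1" by linarith+
  then show "cos (incl_angle x y) = (x \<bullet> y) / ?s" and "0 \<le> incl_angle x y" and "incl_angle x y \<le> pi"
    unfolding incl_angle_def by (simp_all only: cos_arccos arccos_lbound arccos_ubound)
qed

lemma frob_sq_eq_sum_col: "frob_sq M = (\<Sum>j<dim_col M. col M j \<bullet> col M j)"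
  unfolding frob_sq_def
  by (subst sum.swap) (simp add: scalar_prod_def power2_eq_square atLeast0LessThan)

lemma frob_sq_eq_trace_mult_transpose: "frob_sq M = (\<Sum>i<dim_row M. (M * M\<^sup>T) $$ (i, i))"
  unfolding frob_sq_def
  by (intro sum.cong refl) (simp add: scalar_prod_def power2_eq_square atLeast0LessThan)

lemma frob_sq_smult_mat: "frob_sq (a \<cdot>\<^sub>m M) = a\<^sup>2 * frob_sq M"
  unfolding frob_sq_def by (simp add: sum_distrib_left power_mult_distrib)

lemma (in vec_space) orthogonal_to_cols_of_full_rank:
  assumes B: "B \<in> carrier_mat n nc" and rank: "rank B = n"
    and v: "v \<in> carrier_vec n" and orth: "\<And>j. j < nc \<Longrightarrow> col B j \<bullet> v = 0"
  shows "v \<bullet> v = 0"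
proof -
  let ?C = "set (cols B)"
  have C: "?C \<subseteq> carrier_vec n" using B cols_dim by blast
  obtain S where S: "maximal S (\<lambda>T. T \<subseteq> ?C \<and> lin_indpt T)"
    using maximal_exists[of "\<lambda>T. T \<subseteq> ?C \<and> lin_indpt T" "card ?C" "{}"]
    by (meson List.finite_set card_mono empty_iff empty_subsetI finite_lin_indpt2 rev_finite_subset)
  have SC: "S \<subseteq> ?C" and "lin_indpt S" using S unfolding maximal_def by auto
  have "card S = n" using rank_card_indpt[OF B S] rank by simp
  then have "basis S"
    using SC C \<open>lin_indpt S\<close> dim_is_n finite_subset
    by (intro dim_li_is_basis[OF fin_dim]) auto
  then have "carrier_vec n \<subseteq> span ?C"
    using span_is_monotone[OF SC] unfolding basis_def by auto
  moreover have "v \<in> orthogonal_complement ?C"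
    unfolding orthogonal_complement_def
  proof (intro CollectI conjI ballI v)
    fix y assume "y \<in> ?C"
    then obtain j where j: "j < nc" "y = col B j" using B by (auto simp: cols_def)
    then show "v \<bullet> y = 0" using orth B comm_scalar_prod[OF v, of y] by simp
  qed
  then have "v \<in> orthogonal_complement (span ?C)"
    using in_orthogonal_complement_span[OF C] by simp
  ultimately show ?thesis using v unfolding orthogonal_complement_def by blast
qed

lemma mat_inverse_mult_transpose_full_rank:
  fixes B :: "real mat"
  assumes B: "B \<in> carrier_mat n nc" and rank: "vec_space.rank n B = n"
  obtains M where "mat_inverse (B * B\<^sup>T) = Some M"
proof -
  let ?G = "B * B\<^sup>T"
  have G: "?G \<in> carrier_mat n n" using B by auto
  have "det ?G \<noteq> 0"
  proof
    assume "det ?G = 0"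
    then obtain v where v: "v \<in> carrier_vec n" "v \<noteq> 0\<^sub>v n" "?G *\<^sub>v v = 0\<^sub>v n"
      using det_0_iff_vec_prod_zero_field[OF G] by blast
    define u where "u = B\<^sup>T *\<^sub>v v"
    have u: "u \<in> carrier_vec nc" unfolding u_def using B v by auto
    have "u \<bullet> u = v \<bullet> (B *\<^sub>v u)"
      unfolding u_def by (rule transpose_vec_mult_scalar[OF B _ v(1)]) (use u u_def in simp)
    also have "B *\<^sub>v u = ?G *\<^sub>v v" unfolding u_def using B v by auto
    finally have "u = 0\<^sub>v nc" using v scalar_prod_self_eq_0_iff[OF u] by simp
    moreover have "u $ j = col B j \<bullet> v" if "j < nc" for j
      using that B unfolding u_def by simp
    ultimately have "col B j \<bullet> v = 0" if "j < nc" for j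
      using that by (metis index_zero_vec(1))
    then have "v \<bullet> v = 0" by (intro vec_space.orthogonal_to_cols_of_full_rank[OF B rank v(1)])
    then show False using v scalar_prod_self_eq_0_iff[OF v(1)] by simp
  qed
  then have "?G \<in> Units (ring_mat TYPE(real) n ())" by (rule det_non_zero_imp_unit[OF G])
  then have "mat_inverse ?G \<noteq> None" using mat_inverse(1)[OF G, of "()"] by auto
  then show ?thesis using that by blast
qed

lemma mult_eq_smult_of_col_sums:
  fixes F :: "'a :: comm_semiring_0 mat"
  assumes F: "F \<in> carrier_mat K n" and W: "W \<in> carrier_mat n n"
    and support: "\<And>i j. i < n \<Longrightarrow> j < n \<Longrightarrow> W $$ (i, j) \<noteq> 0 \<Longrightarrow> col F i = col F j"
    and col_sum: "\<And>j. j < n \<Longrightarrow> (\<Sum>i<n. W $$ (i, j)) = c"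
  shows "F * W = c \<cdot>\<^sub>m F"
proof (rule eq_matI)
  fix k j assume "k < dim_row (c \<cdot>\<^sub>m F)" "j < dim_col (c \<cdot>\<^sub>m F)"
  then have k: "k < K" and j: "j < n" using F W by auto
  have "F $$ (k, i) * W $$ (i, j) = F $$ (k, j) * W $$ (i, j)" if i: "i < n" for i
  proof (cases "W $$ (i, j) = 0")
    case False
    then have "col F i $ k = col F j $ k" using support[OF i j] by simp
    then show ?thesis using F i j k by simp
  qed simp
  then have "(F * W) $$ (k, j) = (\<Sum>i<n. F $$ (k, j) * W $$ (i, j))"
    using F W k j by (simp add: scalar_prod_def atLeast0LessThan)
  also have "\<dots> = (c \<cdot>\<^sub>m F) $$ (k, j)"
    using col_sum[OF j] F k j by (simp add: sum_distrib_left[symmetric] mult.commute)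
  finally show "(F * W) $$ (k, j) = (c \<cdot>\<^sub>m F) $$ (k, j)" .
qed (use F W in auto)

lemma lrc_sol_of_gram_eigen_eq:
  fixes F At :: "real mat"
  assumes At: "At \<in> carrier_mat m n" and F: "F \<in> carrier_mat K n"
    and inv: "mat_inverse (At * At\<^sup>T) = Some M"
    and eigen: "F * (At\<^sup>T * At) = c \<cdot>\<^sub>m F" and c: "c \<noteq> 0"
  shows "lrc_sol F At = (1 / c) \<cdot>\<^sub>m (F * At\<^sup>T)"
proof -
  define E where "E = F * At\<^sup>T"
  have AtT: "At\<^sup>T \<in> carrier_mat n m" and E: "E \<in> carrier_mat K m"
    and G: "At * At\<^sup>T \<in> carrier_mat m m"
    using At F unfolding E_def by auto
  have GM: "At * At\<^sup>T * M = 1\<^sub>m m" and M: "M \<in> carrier_mat m m"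
    using mat_inverse(2)[OF G inv] by auto
  have "E * (At * At\<^sup>T) = F * (At\<^sup>T * (At * At\<^sup>T))"
    unfolding E_def using F AtT At by (intro assoc_mult_mat) auto
  also have "At\<^sup>T * (At * At\<^sup>T) = At\<^sup>T * At * At\<^sup>T"
    using assoc_mult_mat[OF AtT At AtT] by simp
  also have "F * (At\<^sup>T * At * At\<^sup>T) = F * (At\<^sup>T * At) * At\<^sup>T"
    using F AtT At by (intro assoc_mult_mat[symmetric]) auto
  also have "\<dots> = c \<cdot>\<^sub>m E" unfolding eigen E_def using F AtT by (rule mult_smult_assoc_mat)
  finally have EG: "E * (At * At\<^sup>T) = c \<cdot>\<^sub>m E" .
  have "E = E * (At * At\<^sup>T) * M"
    unfolding assoc_mult_mat[OF E G M] GM using E by simp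
  also have "\<dots> = c \<cdot>\<^sub>m (E * M)" unfolding EG using E M by (rule mult_smult_assoc_mat)
  finally have "(1 / c) \<cdot>\<^sub>m E = (1 / c) \<cdot>\<^sub>m (c \<cdot>\<^sub>m (E * M))" by (rule arg_cong)
  also have "\<dots> = E * M" using c by (intro eq_matI) auto
  finally show ?thesis unfolding lrc_sol_def E_def[symmetric] inv by simp
qed

lemma frob_sq_mult_transpose_of_gram_eigen:
  fixes F At :: "real mat"
  assumes At: "At \<in> carrier_mat m n" and F: "F \<in> carrier_mat K n"
    and eigen: "F * (At\<^sup>T * At) = c \<cdot>\<^sub>m F"
  shows "frob_sq (F * At\<^sup>T) = c * frob_sq F"
proof -
  have AtT: "At\<^sup>T \<in> carrier_mat n m" and FT: "F\<^sup>T \<in> carrier_mat n K" using At F by auto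
  have "F * At\<^sup>T * (F * At\<^sup>T)\<^sup>T = F * (At\<^sup>T * (At * F\<^sup>T))"
    unfolding transpose_mult[OF F AtT] transpose_transpose
    using F AtT At FT by (intro assoc_mult_mat) auto
  also have "At\<^sup>T * (At * F\<^sup>T) = At\<^sup>T * At * F\<^sup>T"
    using assoc_mult_mat[OF AtT At FT] by simp
  also have "F * (At\<^sup>T * At * F\<^sup>T) = F * (At\<^sup>T * At) * F\<^sup>T"
    using F AtT At FT by (intro assoc_mult_mat[symmetric]) auto
  also have "\<dots> = c \<cdot>\<^sub>m (F * F\<^sup>T)" unfolding eigen using F by (simp add: mult_smult_assoc_mat)
  finally show ?thesis
    using F by (simp add: frob_sq_eq_trace_mult_transpose[of "F * At\<^sup>T"]
        frob_sq_eq_trace_mult_transpose[of F] sum_distrib_left)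
qed

lemma lrc_sol_of_gram_eigen:
  fixes F At :: "real mat"
  assumes At: "At \<in> carrier_mat m n" and F: "F \<in> carrier_mat K n"
    and inv: "mat_inverse (At * At\<^sup>T) = Some M"
    and eigen: "F * (At\<^sup>T * At) = c \<cdot>\<^sub>m F" and c: "c \<noteq> 0"
  shows "lrc_sol F At * At = F" and "frob_sq (lrc_sol F At) = frob_sq F / c"
proof -
  have AtT: "At\<^sup>T \<in> carrier_mat n m" using At by auto
  note D = lrc_sol_of_gram_eigen_eq[OF At F inv eigen c]
  have "lrc_sol F At * At = (1 / c) \<cdot>\<^sub>m (F * At\<^sup>T * At)"
    unfolding D using F AtT At by (intro mult_smult_assoc_mat) auto
  also have "F * At\<^sup>T * At = c \<cdot>\<^sub>m F" using assoc_mult_mat[OF F AtT At] eigen by simp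
  also have "(1 / c) \<cdot>\<^sub>m (c \<cdot>\<^sub>m F) = F" using c by (intro eq_matI) auto
  finally show "lrc_sol F At * At = F" .
  show "frob_sq (lrc_sol F At) = frob_sq F / c"
    unfolding D frob_sq_smult_mat frob_sq_mult_transpose_of_gram_eigen[OF At F eigen]
    using c by (simp add: power2_eq_square)
qed

lemma frob_sq_class_indicator:
  assumes F: "F \<in> carrier_mat K n" and ind: "\<forall>j<n. \<exists>k<K. col F j = unit_vec K k"
  shows "frob_sq F = real n"
proof -
  have "col F j \<bullet> col F j = 1" if "j < n" for j
    using ind that by auto
  then show ?thesis using F by (simp add: frob_sq_eq_sum_col)
qed

lemma aug_mat_carrier: "A \<in> carrier_mat p n \<Longrightarrow> aug_mat A \<in> carrier_mat (Suc p) n"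
  unfolding aug_mat_def by auto

lemma scalar_prod_col_aug_mat:
  assumes A: "A \<in> carrier_mat p n" and beta: "0 \<le> beta_of A" and i: "i < n" and j: "j < n"
  shows "col (aug_mat A) i \<bullet> col (aug_mat A) j = beta_of A + col A i \<bullet> col A j"
proof -
  let ?At = "aug_mat A"
  have "col ?At i \<bullet> col ?At j = (\<Sum>r<Suc p. ?At $$ (r, i) * ?At $$ (r, j))"
    using aug_mat_carrier[OF A] i j by (simp add: scalar_prod_def atLeast0LessThan)
  also have "\<dots> = ?At $$ (0, i) * ?At $$ (0, j) + (\<Sum>r<p. ?At $$ (Suc r, i) * ?At $$ (Suc r, j))"
    by (rule sum.lessThan_Suc_shift)
  also have "\<dots> = beta_of A + col A i \<bullet> col A j"
    using A beta i j by (simp add: aug_mat_def scalar_prod_def atLeast0LessThan)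
  finally show ?thesis .
qed

lemma frob_sq_aug_mat:
  assumes A: "A \<in> carrier_mat p n" and beta: "0 \<le> beta_of A"
  shows "frob_sq (aug_mat A) = real n * beta_of A + frob_sq A"
  using aug_mat_carrier[OF A] A
  by (simp add: frob_sq_eq_sum_col[of "aug_mat A"] frob_sq_eq_sum_col[of A]
      scalar_prod_col_aug_mat[OF A beta] sum.distrib)

lemma sum_scalar_prod_col_mean_removed:
  fixes A :: "'a :: comm_semiring_1 mat"
  assumes A: "A \<in> carrier_mat p n" and mean: "A *\<^sub>v vec n (\<lambda>_. 1) = 0\<^sub>v p" and j: "j < n"
  shows "(\<Sum>i<n. col A i \<bullet> col A j) = 0"
proof -
  have row_sum: "(\<Sum>i<n. A $$ (r, i)) = 0" if "r < p" for r
  proof -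
    have "(A *\<^sub>v vec n (\<lambda>_. 1)) $ r = 0" using mean that by simp
    then show ?thesis using that A by (simp add: scalar_prod_def atLeast0LessThan)
  qed
  have "(\<Sum>i<n. col A i \<bullet> col A j) = (\<Sum>i<n. \<Sum>r<p. A $$ (r, i) * A $$ (r, j))"
    using A j by (intro sum.cong refl) (simp add: scalar_prod_def atLeast0LessThan)
  also have "\<dots> = (\<Sum>r<p. (\<Sum>i<n. A $$ (r, i)) * A $$ (r, j))"
    by (subst sum.swap) (simp add: sum_distrib_right)
  also have "\<dots> = 0" using row_sum by simp
  finally show ?thesis .
qed

lemma sum_col_gram_aug_mat:
  assumes A: "A \<in> carrier_mat p n" and mean: "A *\<^sub>v vec n (\<lambda>_. 1) = 0\<^sub>v p"
    and beta: "0 \<le> beta_of A" and j: "j < n"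
  shows "(\<Sum>i<n. ((aug_mat A)\<^sup>T * aug_mat A) $$ (i, j)) = real n * beta_of A"
proof -
  have "(\<Sum>i<n. ((aug_mat A)\<^sup>T * aug_mat A) $$ (i, j)) = (\<Sum>i<n. beta_of A + col A i \<bullet> col A j)"
    using carrier_matD[OF aug_mat_carrier[OF A]] j
    by (intro sum.cong refl) (simp add: scalar_prod_col_aug_mat[OF A beta])
  also have "\<dots> = real n * beta_of A"
    using sum_scalar_prod_col_mean_removed[OF A mean j] by (simp add: sum.distrib)
  finally show ?thesis .
qed

lemma ideal_graph_mult_gram_aug_mat:
  assumes A: "A \<in> carrier_mat p n" and F: "F \<in> carrier_mat K n"
    and mean: "A *\<^sub>v vec n (\<lambda>_. 1) = 0\<^sub>v p" and beta: "0 \<le> beta_of A"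
    and ideal: "\<forall>i<n. \<forall>j<n. col F i \<noteq> col F j \<longrightarrow> ((aug_mat A)\<^sup>T * aug_mat A) $$ (i,j) = 0"
  shows "F * ((aug_mat A)\<^sup>T * aug_mat A) = (real n * beta_of A) \<cdot>\<^sub>m F"
proof (rule mult_eq_smult_of_col_sums[OF F])
  show "(aug_mat A)\<^sup>T * aug_mat A \<in> carrier_mat n n" using aug_mat_carrier[OF A] by auto
  show "col F i = col F j" if "i < n" "j < n" "((aug_mat A)\<^sup>T * aug_mat A) $$ (i, j) \<noteq> 0" for i j
    using ideal that by blast
  show "(\<Sum>i<n. ((aug_mat A)\<^sup>T * aug_mat A) $$ (i, j)) = real n * beta_of A" if "j < n" for j
    by (rule sum_col_gram_aug_mat[OF A mean beta that])
qed

lemma beta_of_eq_Min: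
  "beta_of A = - Min ((\<lambda>(i, j). col A i \<bullet> col A j) ` ({..<dim_col A} \<times> {..<dim_col A}))"
proof -
  have "{(A\<^sup>T * A) $$ (i, j) | i j. i < dim_col A \<and> j < dim_col A}
      = (\<lambda>(i, j). col A i \<bullet> col A j) ` ({..<dim_col A} \<times> {..<dim_col A})"
    by force
  then show ?thesis unfolding beta_of_def by simp
qed

lemma beta_of_ge:
  assumes "i < dim_col A" and "j < dim_col A"
  shows "- (col A i \<bullet> col A j) \<le> beta_of A"
proof -
  have "col A i \<bullet> col A j \<in> (\<lambda>(i, j). col A i \<bullet> col A j) ` ({..<dim_col A} \<times> {..<dim_col A})"
    using assms by (intro image_eqI[of _ _ "(i, j)"]) auto
  then show ?thesis unfolding beta_of_eq_Min by (simp add: Min_le)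
qed

lemma beta_of_attained:
  assumes "0 < dim_col A"
  obtains i j where "i < dim_col A" and "j < dim_col A" and "beta_of A = - (col A i \<bullet> col A j)"
proof -
  let ?S = "(\<lambda>(i, j). col A i \<bullet> col A j) ` ({..<dim_col A} \<times> {..<dim_col A})"
  have "Min ?S \<in> ?S" using assms by (intro Min_in) auto
  then show ?thesis using that unfolding beta_of_eq_Min by auto
qed

lemma beta_of_pos:
  assumes A: "A \<in> carrier_mat p n" and mean: "A *\<^sub>v vec n (\<lambda>_. 1) = 0\<^sub>v p"
    and nonzero: "\<And>i. i < n \<Longrightarrow> col A i \<noteq> 0\<^sub>v p" and n: "0 < n"
  shows "0 < beta_of A"
proof (rule ccontr)
  assume "\<not> 0 < beta_of A"
  then have nonneg: "0 \<le> col A i \<bullet> col A 0" if "i < n" for i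
    using beta_of_ge[of i A 0] that n A by auto
  have "0 < col A 0 \<bullet> col A 0"
    using A n by (intro scalar_prod_self_pos[OF _ nonzero[OF n]]) auto
  also have "\<dots> \<le> (\<Sum>i<n. col A i \<bullet> col A 0)"
    using n nonneg by (intro member_le_sum) auto
  also have "\<dots> = 0" by (rule sum_scalar_prod_col_mean_removed[OF A mean n])
  finally show False by simp
qed

definition sq_lengths :: "real mat \<Rightarrow> real set" where
  "sq_lengths A = (\<lambda>i. col A i \<bullet> col A i) ` {..<dim_col A}"

lemma zeta_rho_eq: "zeta_rho A = Max (sq_lengths A) / Min (sq_lengths A)"
proof -
  have "{col A i \<bullet> col A i | i. i < dim_col A} = sq_lengths A"
    unfolding sq_lengths_def by auto
  then show ?thesis unfolding zeta_rho_def by simp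
qed

lemma sq_lengths_bounds:
  assumes "i < dim_col A"
  shows "Min (sq_lengths A) \<le> col A i \<bullet> col A i" and "col A i \<bullet> col A i \<le> Max (sq_lengths A)"
  using assms unfolding sq_lengths_def by auto

lemma Min_sq_lengths_pos:
  assumes A: "A \<in> carrier_mat p n" and nonzero: "\<And>i. i < n \<Longrightarrow> col A i \<noteq> 0\<^sub>v p" and n: "0 < n"
  shows "0 < Min (sq_lengths A)"
proof -
  have "Min (sq_lengths A) \<in> sq_lengths A"
    using A n unfolding sq_lengths_def by (intro Min_in) auto
  then obtain i where "i < n" "Min (sq_lengths A) = col A i \<bullet> col A i"
    using A unfolding sq_lengths_def by auto
  then show ?thesis using A by (auto intro: scalar_prod_self_pos[OF _ nonzero])
qed

lemma zeta_bar_bounds: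
  assumes n: "0 < dim_col A"
  shows "Min (sq_lengths A) \<le> zeta_bar A" and "zeta_bar A \<le> Max (sq_lengths A)"
proof -
  let ?n = "real (dim_col A)"
  have "?n * Min (sq_lengths A) \<le> frob_sq A" and "frob_sq A \<le> ?n * Max (sq_lengths A)"
    unfolding frob_sq_eq_sum_col
    using sum_mono[of "{..<dim_col A}" "\<lambda>_. Min (sq_lengths A)" "\<lambda>j. col A j \<bullet> col A j"]
      sum_mono[of "{..<dim_col A}" "\<lambda>j. col A j \<bullet> col A j" "\<lambda>_. Max (sq_lengths A)"]
    by (simp_all add: sq_lengths_bounds)
  then show "Min (sq_lengths A) \<le> zeta_bar A" and "zeta_bar A \<le> Max (sq_lengths A)"
    unfolding zeta_bar_def using n by (simp_all add: field_simps)
qed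

lemma theta_u_attained:
  assumes "0 < dim_col A"
  obtains i j where "i < dim_col A" and "j < dim_col A"
    and "theta_u A = incl_angle (col A i) (col A j)"
proof -
  let ?S = "{incl_angle (col A i) (col A j) | i j. i < dim_col A \<and> j < dim_col A}"
  have "finite ?S"
    using finite_image_set2[of "\<lambda>i. i < dim_col A" "\<lambda>j. j < dim_col A"] by simp
  moreover have "?S \<noteq> {}" using assms by auto
  ultimately have "Max ?S \<in> ?S" by (rule Max_in)
  then show ?thesis using that unfolding theta_u_def by auto
qed

lemma incl_angle_le_theta_u:
  assumes "i < dim_col A" and "j < dim_col A"
  shows "incl_angle (col A i) (col A j) \<le> theta_u A"
  unfolding theta_u_def
  using assms finite_image_set2[of "\<lambda>i. i < dim_col A" "\<lambda>j. j < dim_col A"]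
  by (intro Max_ge) auto

lemma sqrt_sq_lengths_mult_bounds:
  assumes i: "i < dim_col A" and j: "j < dim_col A" and Min: "0 < Min (sq_lengths A)"
  shows "Min (sq_lengths A) \<le> sqrt (col A i \<bullet> col A i) * sqrt (col A j \<bullet> col A j)"
    and "sqrt (col A i \<bullet> col A i) * sqrt (col A j \<bullet> col A j) \<le> Max (sq_lengths A)"
proof -
  let ?lo = "Min (sq_lengths A)" and ?hi = "Max (sq_lengths A)"
  have lo: "?lo \<le> col A k \<bullet> col A k" and hi: "col A k \<bullet> col A k \<le> ?hi"
    if "k < dim_col A" for k using sq_lengths_bounds[OF that] .
  have "?lo = sqrt (?lo * ?lo)" using Min by simp
  also have "\<dots> \<le> sqrt ((col A i \<bullet> col A i) * (col A j \<bullet> col A j))"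
    using lo[OF i] lo[OF j] Min by (intro real_sqrt_le_mono mult_mono) auto
  finally show "?lo \<le> sqrt (col A i \<bullet> col A i) * sqrt (col A j \<bullet> col A j)"
    by (simp add: real_sqrt_mult)
  have "sqrt ((col A i \<bullet> col A i) * (col A j \<bullet> col A j)) \<le> sqrt (?hi * ?hi)"
    using lo[OF i] lo[OF j] hi[OF i] hi[OF j] Min by (intro real_sqrt_le_mono mult_mono) auto
  also have "\<dots> = ?hi" using lo[OF i] hi[OF i] Min by simp
  finally show "sqrt (col A i \<bullet> col A i) * sqrt (col A j \<bullet> col A j) \<le> ?hi"
    by (simp add: real_sqrt_mult)
qed

lemma cos_theta_u_le:
  assumes A: "A \<in> carrier_mat p n" and nonzero: "\<And>i. i < n \<Longrightarrow> col A i \<noteq> 0\<^sub>v p"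
    and i: "i < n" and j: "j < n"
  shows "cos (theta_u A) \<le> (col A i \<bullet> col A j) / (sqrt (col A i \<bullet> col A i) * sqrt (col A j \<bullet> col A j))"
proof -
  have dim: "dim_col A = n" using A by auto
  have pos: "0 < col A k \<bullet> col A k" if "k < n" for k
    using A that by (intro scalar_prod_self_pos[OF _ nonzero[OF that]]) auto
  have "0 < dim_col A" using i dim by simp
  then obtain a b where ab: "a < n" "b < n" "theta_u A = incl_angle (col A a) (col A b)"
    unfolding dim by (rule theta_u_attained[of A, unfolded dim])
  show ?thesis
    using cos_monotone_0_pi_le[of "incl_angle (col A i) (col A j)" "theta_u A"]
      cos_incl_angle[of "col A i" "col A j", OF _ pos[OF i] pos[OF j]]
      cos_incl_angle(2,3)[of "col A a" "col A b", OF _ pos[OF ab(1)] pos[OF ab(2)]]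
      ab(3) incl_angle_le_theta_u[of i A j] i j dim
    by simp
qed

lemma beta_of_bounds_cos_theta_u:
  assumes A: "A \<in> carrier_mat p n" and nonzero: "\<And>i. i < n \<Longrightarrow> col A i \<noteq> 0\<^sub>v p"
    and n: "0 < n" and beta: "0 < beta_of A"
  shows "0 < - cos (theta_u A)"
    and "Min (sq_lengths A) * - cos (theta_u A) \<le> beta_of A"
    and "beta_of A \<le> Max (sq_lengths A) * - cos (theta_u A)"
proof -
  have dim: "dim_col A = n" using A by auto
  define s where "s i = sqrt (col A i \<bullet> col A i)" for i
  have s_pos: "0 < s i" if "i < n" for i
    using A that scalar_prod_self_pos[OF _ nonzero[OF that]] unfolding s_def by simp
  have cos_le: "cos (theta_u A) \<le> (col A i \<bullet> col A j) / (s i * s j)" if "i < n" "j < n" for i j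
    unfolding s_def by (rule cos_theta_u_le[OF A nonzero that])
  have s_bounds: "Min (sq_lengths A) \<le> s i * s j" "s i * s j \<le> Max (sq_lengths A)"
    if "i < n" "j < n" for i j
    using sqrt_sq_lengths_mult_bounds[of i A j] Min_sq_lengths_pos[OF A nonzero n] that dim
    unfolding s_def by auto
  obtain i0 j0 where ij0: "i0 < n" "j0 < n" "beta_of A = - (col A i0 \<bullet> col A j0)"
    using beta_of_attained[of A] n dim by metis
  have s0: "0 < s i0 * s j0" using s_pos ij0 by simp
  have "0 < beta_of A / (s i0 * s j0)" using beta s0 by simp
  also have "\<dots> \<le> - cos (theta_u A)" using cos_le[OF ij0(1,2)] ij0(3) by simp
  finally show u: "0 < - cos (theta_u A)" .
  have "beta_of A = beta_of A / (s i0 * s j0) * (s i0 * s j0)"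
    using s_pos[OF ij0(1)] s_pos[OF ij0(2)] by simp
  also have "\<dots> \<le> - cos (theta_u A) * (s i0 * s j0)"
    using cos_le[OF ij0(1,2)] ij0(3) s0 by (intro mult_right_mono) auto
  also have "\<dots> \<le> - cos (theta_u A) * Max (sq_lengths A)"
    using s_bounds(2)[OF ij0(1,2)] u by (intro mult_left_mono) auto
  finally show "beta_of A \<le> Max (sq_lengths A) * - cos (theta_u A)" by (simp add: mult.commute)
  obtain a b where ab: "a < n" "b < n" "theta_u A = incl_angle (col A a) (col A b)"
    using theta_u_attained[of A] n dim by metis
  have "Min (sq_lengths A) * - cos (theta_u A) \<le> - cos (theta_u A) * (s a * s b)"
    using s_bounds(1)[OF ab(1,2)] u by (simp add: mult.commute mult_left_mono)
  also have "\<dots> = - (col A a \<bullet> col A b)"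
    using cos_incl_angle(1)[of "col A a" "col A b"] ab s_pos[OF ab(1)] s_pos[OF ab(2)] A
    unfolding s_def by simp
  also have "\<dots> \<le> beta_of A" using beta_of_ge ab dim by simp
  finally show "Min (sq_lengths A) * - cos (theta_u A) \<le> beta_of A" .
qed

lemma one_plus_ratio_bounds:
  fixes lo hi z b u :: real
  assumes "0 < lo" "lo \<le> z" "z \<le> hi" "0 < u" "lo * u \<le> b" "b \<le> hi * u"
  shows "1 + 1 / ((hi / lo) * u) \<le> 1 + z / b" and "1 + z / b \<le> 1 + (hi / lo) / u"
proof -
  have b: "0 < b" using assms(1,4,5) by (meson less_le_trans mult_pos_pos)
  have "1 / ((hi / lo) * u) = lo / (hi * u)" using assms by (simp add: field_simps)
  also have "\<dots> \<le> lo / b" using assms b by (intro divide_left_mono) auto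
  also have "\<dots> \<le> z / b" using assms b by (intro divide_right_mono) auto
  finally show "1 + 1 / ((hi / lo) * u) \<le> 1 + z / b" by simp
  have "z / b \<le> hi / b" using assms b by (intro divide_right_mono) auto
  also have "\<dots> \<le> hi / (lo * u)" using assms b by (intro divide_left_mono) auto
  finally show "1 + z / b \<le> 1 + (hi / lo) / u" by simp
qed

theorem theorem6:
  fixes A F :: "real mat" and p n K :: nat
  assumes A_dim: "A \<in> carrier_mat p n"
    and F_dim: "F \<in> carrier_mat K n"
    and mean_removed: "A *\<^sub>v vec n (\<lambda>_. 1) = 0\<^sub>v p"
    and F_ind: "\<forall>j<n. \<exists>k<K. col F j = unit_vec K k"
    and nonzero: "\<forall>i<n. col A i \<noteq> 0\<^sub>v p"
    and rank: "vec_space.rank (Suc p) (aug_mat A) = Suc p"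
    and ideal: "\<forall>i<n. \<forall>j<n. col F i \<noteq> col F j \<longrightarrow> ((aug_mat A)\<^sup>T * aug_mat A) $$ (i,j) = 0"
  shows "fit_err F (aug_mat A) = 1
    \<and> spec_risk F (aug_mat A) = 1 + zeta_bar A / beta_of A
    \<and> 1 + 1 / (zeta_rho A * \<bar>cos (theta_u A)\<bar>) \<le> spec_risk F (aug_mat A)
    \<and> spec_risk F (aug_mat A) \<le> 1 + zeta_rho A / \<bar>cos (theta_u A)\<bar>"
proof -
  let ?At = "aug_mat A" and ?\<beta> = "beta_of A"
  have At: "?At \<in> carrier_mat (Suc p) n" by (rule aug_mat_carrier[OF A_dim])
  have n: "0 < n" using vec_space.rank_le_nc[OF At] rank by simp
  have nonzero': "\<And>i. i < n \<Longrightarrow> col A i \<noteq> 0\<^sub>v p" using nonzero by blast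
  have beta: "0 < ?\<beta>" by (rule beta_of_pos[OF A_dim mean_removed nonzero' n])
  have "F * (?At\<^sup>T * ?At) = (real n * ?\<beta>) \<cdot>\<^sub>m F"
    by (rule ideal_graph_mult_gram_aug_mat[OF A_dim F_dim mean_removed less_imp_le[OF beta] ideal])
  moreover obtain M where "mat_inverse (?At * ?At\<^sup>T) = Some M"
    using mat_inverse_mult_transpose_full_rank[OF At rank] .
  ultimately have fit: "lrc_sol F ?At * ?At = F"
    and risk: "frob_sq (lrc_sol F ?At) = frob_sq F / (real n * ?\<beta>)"
    using lrc_sol_of_gram_eigen[OF At F_dim] n beta by auto
  have "spec_risk F ?At = 1 + zeta_bar A / ?\<beta>"
    unfolding spec_risk_def fit risk frob_sq_class_indicator[OF F_dim F_ind] zeta_bar_def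
      frob_sq_aug_mat[OF A_dim less_imp_le[OF beta]]
    using A_dim n beta by (simp add: field_simps)
  moreover have "fit_err F ?At = 1"
    unfolding fit_err_def fit frob_sq_def by simp
  moreover note bounds = beta_of_bounds_cos_theta_u[OF A_dim nonzero' n beta]
  ultimately show ?thesis
    using one_plus_ratio_bounds[OF Min_sq_lengths_pos[OF A_dim nonzero' n]
        zeta_bar_bounds bounds] A_dim n
    by (simp add: zeta_rho_eq)
qed

end
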